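(* Let $S_L\dot\cup S_R=\{1,\dots,d\}$ be an ordered partition, and for $\boldsymbol m\in\mathbb Z^d$ let $\tilde m_j=m_j$ if $j\in S_L$, $\tilde m_j=-m_j$ if $j\in S_R$. (1) For a finite $\mathcal F\subset\mathbb Z^d$ and $A_{\boldsymbol m}=Z_{\boldsymbol m}+W_{\boldsymbol m}\mathbf j\in\mathbb H^{m\times n}$ ($Z_{\boldsymbol m},W_{\boldsymbol m}\in\mathbb C_{\mathbf i}^{m\times n}$), the sandwich polynomial $p^{(S_L,S_R)}(\boldsymbol\theta)=\sum_{\boldsymbol m\in\mathcal F}e^{-\mathbf i\langle\boldsymbol m,\boldsymbol\theta\rangle_{S_L}}A_{\boldsymbol m}e^{-\mathbf i\langle\boldsymbol m,\boldsymbol\theta\rangle_{S_R}}$ satisfies $$p^{(S_L,S_R)}(\boldsymbol\theta)=\sum_{\boldsymbol m\in\mathcal F}\Bigl(Z_{\boldsymbol m}e^{-\mathbf i\langle\boldsymbol m,\boldsymbol\theta\rangle}+W_{\boldsymbol m}e^{-\mathbf i\langle\tilde{\boldsymbol m},\boldsymbol\theta\rangle}\mathbf j\Bigr).$$ (2) For $F=Z+W\mathbf j\in L^1(\mathbb T^d;\mathbb H^{m\times n})$ with $Z,W:\mathbb T^d\to\mathbb C_{\mathbf i}^{m\times n}$, one has $\widehat F^{(S_L,S_R)}(\boldsymbol m)=\widehat Z(\boldsymbol m)+\widehat W(\tilde{\boldsymbol m})\mathbf j$ for all $\boldsymbol m$, where $\widehat Z,\widehat W$ are the usual complex Fourier coefficients.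 (3) In particular $\widehat F_{\mathrm L}(\boldsymbol m)=\overline{\widehat{\overline F}_{\mathrm R}(-\boldsymbol m)}$, where $\overline{\,\cdot\,}$ denotes entrywise quaternion conjugation.
   Context: $\mathbb H$ is the quaternion algebra with units $\mathbf i,\mathbf j,\mathbf k=\mathbf i\mathbf j$; $\mathbb C_{\mathbf i}=\operatorname{span}_{\mathbb R}\{1,\mathbf i\}\cong\mathbb C$; quaternion conjugation is $\overline{q_0+q_1\mathbf i+q_2\mathbf j+q_3\mathbf k}=q_0-q_1\mathbf i-q_2\mathbf j-q_3\mathbf k$. $\mathbb T^d=[-\pi,\pi)^d$; $\langle\boldsymbol m,\boldsymbol\theta\rangle_S=\sum_{j\in S}m_j\theta_j$ and $\langle\boldsymbol m,\boldsymbol\theta\rangle=\sum_{j=1}^dm_j\theta_j$. Sandwich Fourier coefficients: $\widehat F^{(S_L,S_R)}(\boldsymbol m)=(2\pi)^{-d}\int_{\mathbb T^d}e^{-\mathbf i\langle\boldsymbol m,\boldsymbol\theta\rangle_{S_L}}F(\boldsymbol\theta)e^{-\mathbf i\langle\boldsymbol m,\boldsymbol\theta\rangle_{S_R}}d\boldsymbol\theta$. The left coefficient $\widehat F_{\mathrm L}$ is the case $S_L=\{1,\dots,d\},S_R=\varnothing$, the right coefficient $\widehat F_{\mathrm R}$ the case $S_L=\varnothing,S_R=\{1,\dots,d\}$. Complex Fourier coefficients: $\widehat G(\boldsymbol k)=(2\pi)^{-d}\int G(\boldsymbol\theta)e^{-\mathbf i\langle\boldsymbol k,\boldsymbol\theta\rangle}d\boldsymbol\theta$.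 *)

theory Defs
  imports "HOL-Analysis.Analysis"
begin

text \<open>Quaternions are modelled as real^4 with components (q0,q1,q2,q3) for
  q0 + q1 i + q2 j + q3 k; addition/scaling are the vector operations and the
  Hamilton product is qmul.\<close>

type_synonym quat = "real ^ 4"

definition qmul :: "quat \<Rightarrow> quat \<Rightarrow> quat" where
  "qmul p q = vector
     [ p$1*q$1 - p$2*q$2 - p$3*q$3 - p$4*q$4,
       p$1*q$2 + p$2*q$1 + p$3*q$4 - p$4*q$3,
       p$1*q$3 - p$2*q$4 + p$3*q$1 + p$4*q$2,
       p$1*q$4 + p$2*q$3 - p$3*q$2 + p$4*q$1 ]"

definition qconj :: "quat \<Rightarrow> quat" where
  "qconj q = vector [q$1, - q$2, - q$3, - q$4]"

definition cq :: "complex \<Rightarrow> quat" where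
  "cq z = vector [Re z, Im z, 0, 0]"

definition qj :: quat where
  "qj = vector [0, 0, 1, 0]"

definition torus :: "(real ^ 'd) set" where
  "torus = {\<theta>. \<forall>j. - pi \<le> \<theta>$j \<and> \<theta>$j < pi}"

definition pairS :: "'d set \<Rightarrow> int ^ 'd \<Rightarrow> real ^ 'd \<Rightarrow> real" where
  "pairS S m \<theta> = (\<Sum>j\<in>S. of_int (m$j) * \<theta>$j)"

definition pairF :: "int ^ 'd \<Rightarrow> real ^ 'd \<Rightarrow> real" where
  "pairF m \<theta> = (\<Sum>j\<in>UNIV. of_int (m$j) * \<theta>$j)"

definition tilde :: "'d set \<Rightarrow> int ^ 'd \<Rightarrow> int ^ 'd" where
  "tilde SL m = (\<chi> j. if j \<in> SL then m$j else - m$j)"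

definition sfourier :: "'d::finite set \<Rightarrow> 'd set \<Rightarrow> (real ^ 'd \<Rightarrow> quat ^ 'c ^ 'r)
     \<Rightarrow> int ^ 'd \<Rightarrow> quat ^ 'c ^ 'r" where
  "sfourier SL SR F m = (1 / (2 * pi)) ^ CARD('d) *\<^sub>R
     (LINT \<theta>:torus|lborel. (\<chi> r c. qmul (cq (cis (- pairS SL m \<theta>)))
                             (qmul (F \<theta> $ r $ c) (cq (cis (- pairS SR m \<theta>))))))"

abbreviation leftfourier where "leftfourier F \<equiv> sfourier UNIV {} F"
abbreviation rightfourier where "rightfourier F \<equiv> sfourier {} UNIV F"

definition cfourier :: "(real ^ 'd::finite \<Rightarrow> complex ^ 'c ^ 'r) \<Rightarrow> int ^ 'd \<Rightarrow> complex ^ 'c ^ 'r" where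
  "cfourier G k = (1 / (2 * pi)) ^ CARD('d) *\<^sub>R
     (LINT \<theta>:torus|lborel. (\<chi> r c. G \<theta> $ r $ c * cis (- pairF k \<theta>)))"

definition mconj :: "quat ^ 'c ^ 'r \<Rightarrow> quat ^ 'c ^ 'r" where
  "mconj M = (\<chi> r c. qconj (M $ r $ c))"

end

(* Write an entry of F as Z + W j with Z, W in C_i. Since j z = cnj z j for complex z, the
   right exponential of the sandwich crosses j conjugated:
     e^(-i<m,t>_SL) (Z + W j) e^(-i<m,t>_SR) = Z e^(-i<m,t>) + W e^(-i<m~,t>) j.
   Summing this identity gives (1); integrating it gives (2), the two complex parts being
   integrable because on the torus they are bounded linear images of F times unimodular
   factors. For (3), quaternion conjugation reverses products, conjugates complex scalars
   and, being a linear involution, commutes with the integral. *)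

theory Submission
  imports Defs
begin

lemma vector_4 [simp]:
  "(vector [a, b, c, d] :: 'a::zero ^ 4) $ 1 = a"
  "(vector [a, b, c, d] :: 'a::zero ^ 4) $ 2 = b"
  "(vector [a, b, c, d] :: 'a::zero ^ 4) $ 3 = c"
  "(vector [a, b, c, d] :: 'a::zero ^ 4) $ 4 = d"
  unfolding vector_def by simp_all

lemma quat_eq_iff: "(p::quat) = q \<longleftrightarrow> p$1 = q$1 \<and> p$2 = q$2 \<and> p$3 = q$3 \<and> p$4 = q$4"
  by (simp add: vec_eq_iff forall_4)

lemma qmul_nth [simp]:
  "qmul p q $ 1 = p$1*q$1 - p$2*q$2 - p$3*q$3 - p$4*q$4"
  "qmul p q $ 2 = p$1*q$2 + p$2*q$1 + p$3*q$4 - p$4*q$3"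
  "qmul p q $ 3 = p$1*q$3 - p$2*q$4 + p$3*q$1 + p$4*q$2"
  "qmul p q $ 4 = p$1*q$4 + p$2*q$3 - p$3*q$2 + p$4*q$1"
  by (simp_all add: qmul_def)

lemma qconj_nth [simp]:
  "qconj q $ 1 = q$1" "qconj q $ 2 = - q$2" "qconj q $ 3 = - q$3" "qconj q $ 4 = - q$4"
  by (simp_all add: qconj_def)

lemma cq_nth [simp]: "cq z $ 1 = Re z" "cq z $ 2 = Im z" "cq z $ 3 = 0" "cq z $ 4 = 0"
  by (simp_all add: cq_def)

lemma qj_nth [simp]: "qj $ 1 = 0" "qj $ 2 = 0" "qj $ 3 = 1" "qj $ 4 = 0"
  by (simp_all add: qj_def)

definition cpart :: "quat \<Rightarrow> complex" where
  "cpart q = Complex (q$1) (q$2)"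

definition jpart :: "quat \<Rightarrow> complex" where
  "jpart q = Complex (q$3) (q$4)"

lemma cpart_symplectic [simp]: "cpart (cq z + qmul (cq w) qj) = z"
  by (simp add: cpart_def complex_eq_iff)

lemma jpart_symplectic [simp]: "jpart (cq z + qmul (cq w) qj) = w"
  by (simp add: jpart_def complex_eq_iff)

lemma cis_sandwich_symplectic:
  "qmul (cq (cis a)) (qmul (cq z + qmul (cq w) qj) (cq (cis b)))
   = cq (z * cis (a + b)) + qmul (cq (w * cis (a - b))) qj"
  by (simp add: quat_eq_iff cos_add sin_add cos_diff sin_diff algebra_simps)

lemma qconj_cis_sandwich:
  "qconj (qmul (cq (cis a)) (qmul q (cq (cis b))))
   = qmul (cq (cis (- b))) (qmul (qconj q) (cq (cis (- a))))"
  by (simp add: quat_eq_iff algebra_simps)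

lemma qconj_qconj [simp]: "qconj (qconj q) = q"
  by (simp add: quat_eq_iff)

lemma bounded_linear_cq: "bounded_linear cq"
  unfolding linear_conv_bounded_linear[symmetric]
  by (rule linearI) (simp_all add: quat_eq_iff)

lemma bounded_linear_cq_mult_qj: "bounded_linear (\<lambda>z. qmul (cq z) qj)"
  unfolding linear_conv_bounded_linear[symmetric]
  by (rule linearI) (simp_all add: quat_eq_iff algebra_simps)

lemma bounded_linear_qconj: "bounded_linear qconj"
  unfolding linear_conv_bounded_linear[symmetric]
  by (rule linearI) (simp_all add: quat_eq_iff)

lemma bounded_linear_cpart: "bounded_linear cpart"
  unfolding linear_conv_bounded_linear[symmetric]
  by (rule linearI) (simp_all add: cpart_def complex_eq_iff)

lemma bounded_linear_jpart: "bounded_linear jpart"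
  unfolding linear_conv_bounded_linear[symmetric]
  by (rule linearI) (simp_all add: jpart_def complex_eq_iff)

lemma bounded_linear_entrywise:
  fixes f :: "'a::euclidean_space \<Rightarrow> 'b::real_normed_vector"
  assumes "bounded_linear f"
  shows "bounded_linear (\<lambda>M::'a ^ 'c::finite ^ 'r::finite. \<chi> r c. f (M $ r $ c))"
proof -
  interpret f: bounded_linear f by fact
  show ?thesis
    unfolding linear_conv_bounded_linear[symmetric]
    by (rule linearI) (simp_all add: vec_eq_iff f.add f.scaleR)
qed

lemma pairF_partition:
  assumes "SL \<union> SR = UNIV" "SL \<inter> SR = {}"
  shows "pairF m \<theta> = pairS SL m \<theta> + pairS SR m \<theta>"
  unfolding pairF_def pairS_def assms(1)[symmetric]
  by (rule sum.union_disjoint) (use assms(2) in auto)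

lemma pairF_tilde:
  assumes "SL \<union> SR = UNIV" "SL \<inter> SR = {}"
  shows "pairF (tilde SL m) \<theta> = pairS SL m \<theta> - pairS SR m \<theta>"
proof -
  have "pairF (tilde SL m) \<theta> = pairS SL (tilde SL m) \<theta> + pairS SR (tilde SL m) \<theta>"
    by (rule pairF_partition[OF assms])
  also have "pairS SL (tilde SL m) \<theta> = pairS SL m \<theta>"
    by (simp add: pairS_def tilde_def)
  also have "pairS SR (tilde SL m) \<theta> = - pairS SR m \<theta>"
    using assms(2) by (auto simp: pairS_def tilde_def sum_negf[symmetric] intro!: sum.cong)
  finally show ?thesis by simp
qed

lemma sandwich_symplectic:
  assumes "SL \<union> SR = UNIV" "SL \<inter> SR = {}"
  shows "qmul (cq (cis (- pairS SL m \<theta>))) (qmul (cq z + qmul (cq w) qj) (cq (cis (- pairS SR m \<theta>))))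
    = cq (z * cis (- pairF m \<theta>)) + qmul (cq (w * cis (- pairF (tilde SL m) \<theta>))) qj"
proof -
  have "- pairS SL m \<theta> + - pairS SR m \<theta> = - pairF m \<theta>"
    by (simp add: pairF_partition[OF assms])
  moreover have "- pairS SL m \<theta> - - pairS SR m \<theta> = - pairF (tilde SL m) \<theta>"
    by (simp add: pairF_tilde[OF assms])
  ultimately show ?thesis
    by (simp only: cis_sandwich_symplectic)
qed

lemma integrable_vec_lambda:
  fixes f :: "'a \<Rightarrow> 'n::finite \<Rightarrow> 'b::euclidean_space"
  assumes "\<And>i. integrable M (\<lambda>x. f x i)"
  shows "integrable M (\<lambda>x. \<chi> i. f x i)"
proof -
  have axis_sum: "(\<lambda>x. \<chi> i. f x i) = (\<lambda>x. \<Sum>i\<in>UNIV. axis i (f x i))"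
    by (auto simp: fun_eq_iff vec_eq_iff axis_def if_distrib sum.If_cases cong: if_cong)
  have "bounded_linear (axis i :: 'b \<Rightarrow> 'b ^ 'n)" for i
    unfolding linear_conv_bounded_linear[symmetric] by (rule linearI) (simp_all add: axis_def vec_eq_iff)
  then show ?thesis
    unfolding axis_sum
    by (intro Bochner_Integration.integrable_sum) (rule integrable_bounded_linear[OF _ assms])
qed

lemma integrable_mult_norm_le_1:
  fixes f g :: "'a \<Rightarrow> 'b::{real_normed_field, banach, second_countable_topology}"
  assumes "integrable M f" "g \<in> borel_measurable M" "\<And>x. norm (g x) \<le> 1"
  shows "integrable M (\<lambda>x. g x * f x)"
proof (rule Bochner_Integration.integrable_bound[OF assms(1)])
  show "(\<lambda>x. g x * f x) \<in> borel_measurable M"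
    using assms(2) borel_measurable_integrable[OF assms(1)] by measurable
  show "AE x in M. norm (g x * f x) \<le> norm (f x)"
    using assms(3) by (auto simp: norm_mult intro!: mult_left_le_one_le)
qed

lemma set_integrable_entrywise_mult_norm_le_1:
  fixes G :: "'a \<Rightarrow> 'b::{real_normed_field, euclidean_space} ^ 'c::finite ^ 'r::finite"
  assumes "set_integrable M A G" "e \<in> borel_measurable M" "\<And>x. norm (e x) \<le> 1"
  shows "set_integrable M A (\<lambda>x. \<chi> r c. G x $ r $ c * e x)"
proof -
  have "integrable M (\<lambda>x. (indicator A x *\<^sub>R G x) $ r $ c)" for r c
    using integrable_bounded_linear[OF bounded_linear_compose[OF bounded_linear_vec_nth
        bounded_linear_vec_nth]] assms(1)
    unfolding set_integrable_def .
  then have "integrable M (\<lambda>x. e x * (indicator A x *\<^sub>R G x) $ r $ c)" for r c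
    using assms(2,3) by (rule integrable_mult_norm_le_1)
  then have "integrable M (\<lambda>x. \<chi> r c. e x * (indicator A x *\<^sub>R G x) $ r $ c)"
    by (intro integrable_vec_lambda)
  moreover have "(\<chi> r c. e x * (indicator A x *\<^sub>R G x) $ r $ c)
      = indicator A x *\<^sub>R (\<chi> r c. G x $ r $ c * e x)" for x
    by (simp add: vec_eq_iff mult.commute)
  ultimately show ?thesis
    unfolding set_integrable_def by simp
qed

lemma set_integrable_bounded_linear:
  assumes "bounded_linear T" "set_integrable M A f"
  shows "set_integrable M A (\<lambda>x. T (f x))"
proof -
  interpret T: bounded_linear T by fact
  show ?thesis
    using integrable_bounded_linear[OF assms(1) assms(2)[unfolded set_integrable_def]]
    by (simp add: set_integrable_def T.scaleR)
qed

lemma set_integral_bounded_linear: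
  assumes "bounded_linear T" "set_integrable M A f"
  shows "(LINT x:A|M. T (f x)) = T (LINT x:A|M. f x)"
proof -
  interpret T: bounded_linear T by fact
  show ?thesis
    using integral_bounded_linear[OF assms(1) assms(2)[unfolded set_integrable_def]]
    by (simp add: set_lebesgue_integral_def T.scaleR)
qed

text \<open>No integrability is needed for a linear involution: it maps non-integrable
  functions to non-integrable ones, whose integrals are both \<open>0\<close>.\<close>
lemma set_integral_bounded_linear_involution:
  assumes "bounded_linear T" "\<And>x. T (T x) = x"
  shows "(LINT x:A|M. T (f x)) = T (LINT x:A|M. f x)"
proof -
  interpret T: bounded_linear T by fact
  show ?thesis
    using integral_bounded_linear'[OF assms(1) assms(1), of M "\<lambda>x. indicator A x *\<^sub>R f x"] assms(2)
    by (simp add: set_lebesgue_integral_def T.scaleR)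
qed

lemma set_integrable_symplectic_parts:
  fixes F :: "'a \<Rightarrow> quat ^ 'c::finite ^ 'r::finite" and Z W :: "'a \<Rightarrow> complex ^ 'c ^ 'r"
  assumes F: "set_integrable M A F"
    and split: "\<forall>x\<in>A. \<forall>r c. F x $ r $ c = cq (Z x $ r $ c) + qmul (cq (W x $ r $ c)) qj"
  shows "set_integrable M A Z" "set_integrable M A W"
proof -
  have "set_integrable M A (\<lambda>x. \<chi> r c. cpart (F x $ r $ c))"
    by (rule set_integrable_bounded_linear[OF bounded_linear_entrywise[OF bounded_linear_cpart] F])
  then show "set_integrable M A Z"
    using split by (simp cong: set_integrable_cong add: vec_eq_iff)
  have "set_integrable M A (\<lambda>x. \<chi> r c. jpart (F x $ r $ c))"
    by (rule set_integrable_bounded_linear[OF bounded_linear_entrywise[OF bounded_linear_jpart] F])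
  then show "set_integrable M A W"
    using split by (simp cong: set_integrable_cong add: vec_eq_iff)
qed

lemma sets_lborel_torus: "torus \<in> sets lborel"
  unfolding torus_def by measurable

lemma borel_measurable_cis_pairF: "(\<lambda>\<theta>. cis (- pairF k \<theta>)) \<in> borel_measurable lborel"
  unfolding pairF_def measurable_lborel2
  by (intro borel_measurable_continuous_onI continuous_intros)

lemma set_integrable_cfourier_integrand:
  assumes "set_integrable lborel torus G"
  shows "set_integrable lborel torus (\<lambda>\<theta>. \<chi> r c. G \<theta> $ r $ c * cis (- pairF k \<theta>))"
  using assms borel_measurable_cis_pairF by (rule set_integrable_entrywise_mult_norm_le_1) simp

lemma sfourier_symplectic:
  fixes F :: "real ^ 'd::finite \<Rightarrow> quat ^ 'c::finite ^ 'r::finite"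
    and Z W :: "real ^ 'd \<Rightarrow> complex ^ 'c ^ 'r"
  assumes part: "SL \<union> SR = UNIV" "SL \<inter> SR = {}"
    and F: "set_integrable lborel torus F"
    and split: "\<forall>\<theta>\<in>torus. \<forall>r c. F \<theta> $ r $ c = cq (Z \<theta> $ r $ c) + qmul (cq (W \<theta> $ r $ c)) qj"
  shows "sfourier SL SR F m
    = (\<chi> r c. cq (cfourier Z m $ r $ c) + qmul (cq (cfourier W (tilde SL m) $ r $ c)) qj)"
proof -
  define HZ where "HZ \<theta> = (\<chi> r c. Z \<theta> $ r $ c * cis (- pairF m \<theta>))" for \<theta>
  define HW where "HW \<theta> = (\<chi> r c. W \<theta> $ r $ c * cis (- pairF (tilde SL m) \<theta>))" for \<theta>
  define LZ :: "complex ^ 'c ^ 'r \<Rightarrow> quat ^ 'c ^ 'r" where "LZ X = (\<chi> r c. cq (X $ r $ c))" for X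
  define LW :: "complex ^ 'c ^ 'r \<Rightarrow> quat ^ 'c ^ 'r" where
    "LW X = (\<chi> r c. qmul (cq (X $ r $ c)) qj)" for X
  have LZ: "bounded_linear LZ"
    unfolding LZ_def[abs_def] by (rule bounded_linear_entrywise[OF bounded_linear_cq])
  have LW: "bounded_linear LW"
    unfolding LW_def[abs_def] by (rule bounded_linear_entrywise[OF bounded_linear_cq_mult_qj])
  have HZ_int: "set_integrable lborel torus HZ"
    unfolding HZ_def[abs_def]
    by (rule set_integrable_cfourier_integrand[OF set_integrable_symplectic_parts(1)[OF F split]])
  have HW_int: "set_integrable lborel torus HW"
    unfolding HW_def[abs_def]
    by (rule set_integrable_cfourier_integrand[OF set_integrable_symplectic_parts(2)[OF F split]])
  have "(LINT \<theta>:torus|lborel. \<chi> r c. qmul (cq (cis (- pairS SL m \<theta>)))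
                                 (qmul (F \<theta> $ r $ c) (cq (cis (- pairS SR m \<theta>)))))
      = (LINT \<theta>:torus|lborel. LZ (HZ \<theta>) + LW (HW \<theta>))"
  proof (intro set_lebesgue_integral_cong[OF sets_lborel_torus] allI impI)
    fix \<theta> :: "real ^ 'd" assume "\<theta> \<in> torus"
    then show "(\<chi> r c. qmul (cq (cis (- pairS SL m \<theta>)))
                        (qmul (F \<theta> $ r $ c) (cq (cis (- pairS SR m \<theta>)))))
      = LZ (HZ \<theta>) + LW (HW \<theta>)"
      using split
      by (simp add: vec_eq_iff[where 'a="quat ^ 'c"] vec_eq_iff[where 'a=quat]
          sandwich_symplectic[OF part] HZ_def HW_def LZ_def LW_def)
  qed
  also have "\<dots> = LZ (LINT \<theta>:torus|lborel. HZ \<theta>) + LW (LINT \<theta>:torus|lborel. HW \<theta>)"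
    using set_integrable_bounded_linear[OF LZ HZ_int] set_integrable_bounded_linear[OF LW HW_int]
    by (simp add: set_integral_bounded_linear[OF LZ HZ_int] set_integral_bounded_linear[OF LW HW_int])
  finally have "sfourier SL SR F m = (1 / (2 * pi)) ^ CARD('d) *\<^sub>R
      (LZ (LINT \<theta>:torus|lborel. HZ \<theta>) + LW (LINT \<theta>:torus|lborel. HW \<theta>))"
    unfolding sfourier_def by (rule arg_cong)
  also have "\<dots> = LZ (cfourier Z m) + LW (cfourier W (tilde SL m))"
    unfolding cfourier_def HZ_def[symmetric] HW_def[symmetric]
    by (simp add: scaleR_add_right linear_scale[OF bounded_linear.linear[OF LZ]]
        linear_scale[OF bounded_linear.linear[OF LW]])
  finally show ?thesis
    by (simp add: LZ_def LW_def vec_eq_iff[where 'a="quat ^ 'c"] vec_eq_iff[where 'a=quat])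
qed

lemma mconj_mconj [simp]: "mconj (mconj M) = M"
  by (simp add: mconj_def vec_eq_iff[where 'a=quat])

lemma bounded_linear_mconj: "bounded_linear mconj"
  unfolding mconj_def[abs_def] by (rule bounded_linear_entrywise[OF bounded_linear_qconj])

lemma leftfourier_eq_mconj_rightfourier:
  fixes F :: "real ^ 'd::finite \<Rightarrow> quat ^ 'c::finite ^ 'r::finite"
  shows "leftfourier F m = mconj (rightfourier (\<lambda>\<theta>. mconj (F \<theta>)) (- m))"
proof -
  have pairS_uminus: "pairS UNIV (- m) \<theta> = - pairS UNIV m \<theta>" for \<theta> :: "real ^ 'd"
    by (simp add: pairS_def sum_negf[symmetric])
  have pairS_empty: "pairS {} k \<theta> = 0" for k \<theta>
    by (simp add: pairS_def)
  have "mconj (rightfourier (\<lambda>\<theta>. mconj (F \<theta>)) (- m))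
      = (1 / (2 * pi)) ^ CARD('d) *\<^sub>R (LINT \<theta>:torus|lborel. mconj (\<chi> r c.
          qmul (cq (cis (- pairS {} (- m) \<theta>)))
            (qmul (mconj (F \<theta>) $ r $ c) (cq (cis (- pairS UNIV (- m) \<theta>))))))"
    unfolding sfourier_def
    by (simp only: linear_scale[OF bounded_linear.linear[OF bounded_linear_mconj]]
        set_integral_bounded_linear_involution[OF bounded_linear_mconj mconj_mconj])
  also have "\<dots> = leftfourier F m"
    unfolding sfourier_def
    by (simp only: mconj_def vec_lambda_beta qconj_cis_sandwich qconj_qconj pairS_uminus pairS_empty
        minus_minus minus_zero)
  finally show ?thesis ..
qed

theorem mainTheorem4:
  fixes SL SR :: "'d::finite set"
  assumes part: "SL \<union> SR = UNIV" "SL \<inter> SR = {}"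
  shows
   "(\<forall>(Fs :: (int ^ 'd) set) (A :: int ^ 'd \<Rightarrow> quat ^ 'c::finite ^ 'r::finite)
       (Z :: int ^ 'd \<Rightarrow> complex ^ 'c ^ 'r) W (\<theta> :: real ^ 'd).
       finite Fs \<and>
       (\<forall>m r c. A m $ r $ c = cq (Z m $ r $ c) + qmul (cq (W m $ r $ c)) qj) \<longrightarrow>
       (\<Sum>m\<in>Fs. (\<chi> r c. qmul (cq (cis (- pairS SL m \<theta>)))
                         (qmul (A m $ r $ c) (cq (cis (- pairS SR m \<theta>))))))
       = (\<Sum>m\<in>Fs. (\<chi> r c. cq (Z m $ r $ c * cis (- pairF m \<theta>))
                           + qmul (cq (W m $ r $ c * cis (- pairF (tilde SL m) \<theta>))) qj)))
  \<and> (\<forall>(F :: real ^ 'd \<Rightarrow> quat ^ 'c ^ 'r) (Z :: real ^ 'd \<Rightarrow> complex ^ 'c ^ 'r) W.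
       set_integrable lborel torus F \<and>
       (\<forall>\<theta>\<in>torus. \<forall>r c. F \<theta> $ r $ c = cq (Z \<theta> $ r $ c) + qmul (cq (W \<theta> $ r $ c)) qj) \<longrightarrow>
       (\<forall>m. sfourier SL SR F m
             = (\<chi> r c. cq (cfourier Z m $ r $ c) + qmul (cq (cfourier W (tilde SL m) $ r $ c)) qj)))
  \<and> (\<forall>(F :: real ^ 'd \<Rightarrow> quat ^ 'c ^ 'r).
       set_integrable lborel torus F \<longrightarrow>
       (\<forall>m. leftfourier F m = mconj (rightfourier (\<lambda>\<theta>. mconj (F \<theta>)) (- m))))"
  using sandwich_symplectic[OF part] sfourier_symplectic[OF part] leftfourier_eq_mconj_rightfourier
  by (intro conjI allI impI) auto

end
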